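(* Let $(A,[\cdot,\cdot])$ be a Malcev algebra, $\rho:A\to\mathrm{End}(V)$ a representation of $A$, $\widehat{A}=A\ltimes_{\rho^*}V^*$, and $T:V\to A$ a linear map. The following are equivalent: (i) $T$ is an $\mathcal{O}$-operator of $A$ associated to $\rho$; (ii) $T-\sigma(T)$ is a skew-symmetric solution of the Malcev Yang-Baxter equation in $\widehat{A}$; (iii) $T-\sigma(T)$, regarded as a linear map $\widehat{A}^*\to\widehat{A}$, is an $\mathcal{O}$-operator of the Malcev algebra $\widehat{A}$ associated to the representation $\mathrm{ad}^*$ of $\widehat{A}$ on $\widehat{A}^*$.
   Context: Field $\mathbb{K}$ of characteristic zero, finite-dimensional spaces. A Malcev algebra is a vector space with an anti-symmetric bracket satisfying $J(x,y,[x,z])=[J(x,y,z),x]$, $J(x,y,z)=[[x,y],z]+[[z,x],y]+[[y,z],x]$. A representation of $A$ on $V$ is a linear map $\rho:A\to\mathrm{End}(V)$ with $\rho([[x,y],z])=\rho(x)\rho(y)\rho(z)-\rho(z)\rho(x)\rho(y)+\rho(y)\rho([z,x])-\rho([y,z])\rho(x)$. Its dual $\rho^*$ is given by $\langle\rho^*(x)a^*,b\rangle=-\langle a^*,\rho(x)b\rangle$. $\widehat{A}=A\ltimes_{\rho^*}V^*$ is $A\oplus V^*$ with bracket $[x+a^*,y+b^*]=[x,y]+\rho^*(x)b^*-\rho^*(y)a^*$. The adjoint representation is $\mathrm{ad}(x)y=[x,y]$, and $\mathrm{ad}^*$ is its dual. An $\mathcal{O}$-operator associated to a representation $(W,\pi)$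 of a Malcev algebra $L$ is a linear map $S:W\to L$ with $[S(a),S(b)]=S(\pi(S(a))b-\pi(S(b))a)$. $T$ is identified with $\sum_i T(v_i)\otimes v_i^*\in\widehat{A}\otimes\widehat{A}$ ($\{v_i\}$ a basis of $V$, $\{v_i^*\}$ the dual basis), $\sigma(a\otimes b)=b\otimes a$, and an element $r\in\widehat{A}\otimes\widehat{A}$ is regarded as a map $\widehat{A}^*\to\widehat{A}$ via $\langle a^*,r(b^* )\rangle=\langle a^*\otimes b^*,r\rangle$. For $r=\sum_i x_i\otimes y_i$, $r$ solves the Malcev Yang-Baxter equation if $\sum_{i,j}[x_i,x_j]\otimes y_i\otimes y_j+\sum_{i,j}x_i\otimes[y_i,x_j]\otimes y_j+\sum_{i,j}x_i\otimes x_j\otimes[y_i,y_j]=0$. *)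

theory Defs
  imports "HOL-Library.Function_Algebras"
begin

text \<open>Coordinate model of finite-dimensional spaces over a field 'k.
  A space with basis indexed by a finite set I is represented by the functions
  x :: 'i => 'k vanishing outside I (coordinates w.r.t. the basis e_i).
  A bilinear bracket is given by structure constants C i j k
  ([e_i, e_j] = sum_k C i j k e_k); a linear action of A on a space with basis
  indexed by J is given by R i a b (rho(e_i) v_b = sum_a R i a b v_a);
  a linear map S : W -> L is given by its matrix M i b (S(w_b) = sum_i M i b e_i).\<close>

definition vecs :: "'i set \<Rightarrow> ('i \<Rightarrow> 'k::zero) set" where
  "vecs I = {x. \<forall>k. k \<notin> I \<longrightarrow> x k = 0}"

definition bv :: "'i \<Rightarrow> 'i \<Rightarrow> 'k::{zero,one}" where
  "bv p = (\<lambda>k. if k = p then 1 else 0)"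

definition brk :: "'i set \<Rightarrow> ('i \<Rightarrow> 'i \<Rightarrow> 'i \<Rightarrow> 'k::comm_ring_1)
    \<Rightarrow> ('i \<Rightarrow> 'k) \<Rightarrow> ('i \<Rightarrow> 'k) \<Rightarrow> ('i \<Rightarrow> 'k)" where
  "brk I C x y = (\<lambda>k. if k \<in> I then (\<Sum>i\<in>I. \<Sum>j\<in>I. x i * y j * C i j k) else 0)"

definition jac :: "'i set \<Rightarrow> ('i \<Rightarrow> 'i \<Rightarrow> 'i \<Rightarrow> 'k::comm_ring_1)
    \<Rightarrow> ('i \<Rightarrow> 'k) \<Rightarrow> ('i \<Rightarrow> 'k) \<Rightarrow> ('i \<Rightarrow> 'k) \<Rightarrow> ('i \<Rightarrow> 'k)" where
  "jac I C x y z = brk I C (brk I C x y) z + brk I C (brk I C z x) y + brk I C (brk I C y z) x"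

definition malcev_alg :: "'i set \<Rightarrow> ('i \<Rightarrow> 'i \<Rightarrow> 'i \<Rightarrow> 'k::comm_ring_1) \<Rightarrow> bool" where
  "malcev_alg I C \<longleftrightarrow>
     (\<forall>x\<in>vecs I. \<forall>y\<in>vecs I. brk I C x y = - brk I C y x) \<and>
     (\<forall>x\<in>vecs I. \<forall>y\<in>vecs I. \<forall>z\<in>vecs I.
        jac I C x y (brk I C x z) = brk I C (jac I C x y z) x)"

definition act :: "'i set \<Rightarrow> 'j set \<Rightarrow> ('i \<Rightarrow> 'j \<Rightarrow> 'j \<Rightarrow> 'k::comm_ring_1)
    \<Rightarrow> ('i \<Rightarrow> 'k) \<Rightarrow> ('j \<Rightarrow> 'k) \<Rightarrow> ('j \<Rightarrow> 'k)" where
  "act I J R x v = (\<lambda>a. if a \<in> J then (\<Sum>i\<in>I. \<Sum>b\<in>J. x i * R i a b * v b) else 0)"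

definition is_rep :: "'i set \<Rightarrow> ('i \<Rightarrow> 'i \<Rightarrow> 'i \<Rightarrow> 'k::comm_ring_1) \<Rightarrow> 'j set
    \<Rightarrow> ('i \<Rightarrow> 'j \<Rightarrow> 'j \<Rightarrow> 'k) \<Rightarrow> bool" where
  "is_rep I C J R \<longleftrightarrow>
     (\<forall>x\<in>vecs I. \<forall>y\<in>vecs I. \<forall>z\<in>vecs I. \<forall>v\<in>vecs J.
        act I J R (brk I C (brk I C x y) z) v =
          act I J R x (act I J R y (act I J R z v))
        - act I J R z (act I J R x (act I J R y v))
        + act I J R y (act I J R (brk I C z x) v)
        - act I J R (brk I C y z) (act I J R x v))"

text \<open>Dual representation w.r.t. the dual basis:
  <rho*(x) a*, b> = - <a*, rho(x) b>.\<close>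
definition dual_rep :: "('i \<Rightarrow> 'j \<Rightarrow> 'j \<Rightarrow> 'k::comm_ring_1) \<Rightarrow> ('i \<Rightarrow> 'j \<Rightarrow> 'j \<Rightarrow> 'k)" where
  "dual_rep R = (\<lambda>i b c. - R i c b)"

text \<open>Adjoint representation: ad(x) y = [x,y].\<close>
definition ad_rep :: "('i \<Rightarrow> 'i \<Rightarrow> 'i \<Rightarrow> 'k) \<Rightarrow> ('i \<Rightarrow> 'i \<Rightarrow> 'i \<Rightarrow> 'k)" where
  "ad_rep C = (\<lambda>i a b. C i b a)"

definition linmap :: "'i set \<Rightarrow> 'j set \<Rightarrow> ('i \<Rightarrow> 'j \<Rightarrow> 'k::comm_ring_1)
    \<Rightarrow> ('j \<Rightarrow> 'k) \<Rightarrow> ('i \<Rightarrow> 'k)" where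
  "linmap I J M w = (\<lambda>i. if i \<in> I then (\<Sum>b\<in>J. M i b * w b) else 0)"

definition O_operator :: "'i set \<Rightarrow> ('i \<Rightarrow> 'i \<Rightarrow> 'i \<Rightarrow> 'k::comm_ring_1) \<Rightarrow> 'j set
    \<Rightarrow> ('i \<Rightarrow> 'j \<Rightarrow> 'j \<Rightarrow> 'k) \<Rightarrow> ('i \<Rightarrow> 'j \<Rightarrow> 'k) \<Rightarrow> bool" where
  "O_operator I C J P M \<longleftrightarrow>
     (\<forall>a\<in>vecs J. \<forall>b\<in>vecs J.
        brk I C (linmap I J M a) (linmap I J M b) =
        linmap I J M (act I J P (linmap I J M a) b - act I J P (linmap I J M b) a))"

text \<open>Structure constants of the semidirect product A \<ltimes>_{rho*} V^*, basis
  Inl i = e_i (of A) and Inr b = v_b^* (dual basis of V^*):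
  [x + a*, y + b*] = [x,y] + rho*(x) b* - rho*(y) a*.\<close>
definition semidirect :: "('i \<Rightarrow> 'i \<Rightarrow> 'i \<Rightarrow> 'k::comm_ring_1) \<Rightarrow> ('i \<Rightarrow> 'j \<Rightarrow> 'j \<Rightarrow> 'k)
    \<Rightarrow> ('i + 'j) \<Rightarrow> ('i + 'j) \<Rightarrow> ('i + 'j) \<Rightarrow> 'k" where
  "semidirect C R p q s =
     (case (p, q, s) of
        (Inl i, Inl j, Inl k) \<Rightarrow> C i j k
      | (Inl i, Inr c, Inr b) \<Rightarrow> dual_rep R i b c
      | (Inr c, Inl i, Inr b) \<Rightarrow> - dual_rep R i b c
      | _ \<Rightarrow> 0)"

text \<open>Tensors in \<^emph>\<open>Ahat \<otimes> Ahat\<close> as coefficient arrays w.r.t. the basis e_p \<otimes> e_q.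
  T = sum_b T(v_b) \<otimes> v_b^*.\<close>
definition tensor_of_map :: "('i \<Rightarrow> 'j \<Rightarrow> 'k::zero) \<Rightarrow> ('i + 'j) \<Rightarrow> ('i + 'j) \<Rightarrow> 'k" where
  "tensor_of_map T p q = (case (p, q) of (Inl i, Inr b) \<Rightarrow> T i b | _ \<Rightarrow> 0)"

definition flip_tensor :: "('a \<Rightarrow> 'a \<Rightarrow> 'k) \<Rightarrow> 'a \<Rightarrow> 'a \<Rightarrow> 'k" where
  "flip_tensor r p q = r q p"

definition T_minus_sigma_T :: "('i \<Rightarrow> 'j \<Rightarrow> 'k::ab_group_add) \<Rightarrow> ('i + 'j) \<Rightarrow> ('i + 'j) \<Rightarrow> 'k" where
  "T_minus_sigma_T T = (\<lambda>p q. tensor_of_map T p q - flip_tensor (tensor_of_map T) p q)"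

definition skew_tensor :: "'a set \<Rightarrow> ('a \<Rightarrow> 'a \<Rightarrow> 'k::ab_group_add) \<Rightarrow> bool" where
  "skew_tensor I r \<longleftrightarrow> (\<forall>p\<in>I. \<forall>q\<in>I. r p q = - r q p)"

definition tensor3 :: "('a \<Rightarrow> 'k::times) \<Rightarrow> ('a \<Rightarrow> 'k) \<Rightarrow> ('a \<Rightarrow> 'k) \<Rightarrow> ('a \<times> 'a \<times> 'a \<Rightarrow> 'k)" where
  "tensor3 x y z = (\<lambda>(k, s, t). x k * y s * z t)"

text \<open>Malcev Yang-Baxter equation for r = sum_{p,q} r p q e_p \<otimes> e_q, i.e.
  with the terms x = r p q e_p, y = e_q.\<close>
definition MYBE :: "'a set \<Rightarrow> ('a \<Rightarrow> 'a \<Rightarrow> 'a \<Rightarrow> 'k::comm_ring_1) \<Rightarrow> ('a \<Rightarrow> 'a \<Rightarrow> 'k) \<Rightarrow> bool" where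
  "MYBE I C r \<longleftrightarrow>
    (\<Sum>p\<in>I. \<Sum>q\<in>I. \<Sum>p'\<in>I. \<Sum>q'\<in>I.
       (\<lambda>w. r p q * r p' q' *
          (tensor3 (brk I C (bv p) (bv p')) (bv q) (bv q') w
         + tensor3 (bv p) (brk I C (bv q) (bv p')) (bv q') w
         + tensor3 (bv p) (bv p') (brk I C (bv q) (bv q')) w))) = 0"

end

theory Submission
  imports Defs
begin

(* Each of the three conditions is bilinear, so it can be tested on basis vectors, where it
   becomes a family of identities between structure constants.  For a skew-symmetric tensor r
   and an anti-symmetric bracket, the (s,t,w) component of the Malcev Yang-Baxter tensor is
   exactly the e_s-coefficient of [r e_t, r e_w] - r (ad*(r e_t) e_w - ad*(r e_w) e_t); hence (ii)
   and (iii) agree, T - sigma(T) being skew.  For (i) <=> (iii), the grading of A x| V* kills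
   every coefficient of the O-operator identity of T - sigma(T) except those with one index
   in A and two in V*, and each of these is, up to sign, a coefficient of the O-operator
   identity of T. *)

lemma sum_fun_apply: "sum f A x = (\<Sum>a\<in>A. f a x)"
  by (induction A rule: infinite_finite_induct) auto

lemma sum_if_const_cond: "(\<Sum>x\<in>A. if P then f x else 0) = (if P then sum f A else 0)"
  by simp

lemma sum_swap_pairs:
  "(\<Sum>i\<in>A. \<Sum>j\<in>B. \<Sum>u\<in>C. \<Sum>v\<in>D. F i j u v) = (\<Sum>u\<in>C. \<Sum>v\<in>D. \<Sum>i\<in>A. \<Sum>j\<in>B. F i j u v)"
proof -
  have "(\<Sum>i\<in>A. \<Sum>j\<in>B. \<Sum>u\<in>C. \<Sum>v\<in>D. F i j u v) = (\<Sum>i\<in>A. \<Sum>u\<in>C. \<Sum>v\<in>D. \<Sum>j\<in>B. F i j u v)"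
    by (intro sum.cong refl) (subst sum.swap, intro sum.cong refl sum.swap)
  also have "\<dots> = (\<Sum>u\<in>C. \<Sum>v\<in>D. \<Sum>i\<in>A. \<Sum>j\<in>B. F i j u v)"
    by (subst sum.swap, intro sum.cong refl sum.swap)
  finally show ?thesis .
qed

lemma bv_vecs: "p \<in> I \<Longrightarrow> bv p \<in> vecs I"
  by (auto simp: vecs_def bv_def)

lemma sum_bv_times:
  "finite A \<Longrightarrow> (\<Sum>x\<in>A. bv p x * f x) = (if p \<in> A then f p else (0::'k::comm_ring_1))"
  by (simp add: bv_def if_distrib[where f="\<lambda>x. x * _"] cong: if_cong)

lemma brk_bv_bv:
  "finite I \<Longrightarrow> p \<in> I \<Longrightarrow> q \<in> I \<Longrightarrow>
    brk I C (bv p) (bv q) s = (if s \<in> I then C p q s else (0::'k::comm_ring_1))"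
  by (simp add: brk_def bv_def sum_if_const_cond if_distrib[where f="\<lambda>x. x * _"] cong: if_cong)

(* For S = linmap I J M and the basis vectors w_u, w_v of W: the e_s-coefficients of
   [S w_u, S w_v] and of S (pi (S w_u) w_v - pi (S w_v) w_u). *)
definition O_bracket_coeff :: "'i set \<Rightarrow> ('i \<Rightarrow> 'i \<Rightarrow> 'i \<Rightarrow> 'k::comm_ring_1) \<Rightarrow> 'j set
    \<Rightarrow> ('i \<Rightarrow> 'j \<Rightarrow> 'k) \<Rightarrow> 'i \<Rightarrow> 'j \<Rightarrow> 'j \<Rightarrow> 'k" where
  "O_bracket_coeff I C J M s u v = (\<Sum>i\<in>I. \<Sum>j\<in>I. M i u * M j v * C i j s)"

definition O_action_coeff :: "'i set \<Rightarrow> 'j set \<Rightarrow> ('i \<Rightarrow> 'j \<Rightarrow> 'j \<Rightarrow> 'k::comm_ring_1)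
    \<Rightarrow> ('i \<Rightarrow> 'j \<Rightarrow> 'k) \<Rightarrow> 'i \<Rightarrow> 'j \<Rightarrow> 'j \<Rightarrow> 'k" where
  "O_action_coeff I J P M s u v =
     (\<Sum>c\<in>J. \<Sum>i\<in>I. M s c * M i u * P i c v) - (\<Sum>c\<in>J. \<Sum>i\<in>I. M s c * M i v * P i c u)"

definition O_defect :: "'i set \<Rightarrow> ('i \<Rightarrow> 'i \<Rightarrow> 'i \<Rightarrow> 'k::comm_ring_1) \<Rightarrow> 'j set
    \<Rightarrow> ('i \<Rightarrow> 'j \<Rightarrow> 'j \<Rightarrow> 'k) \<Rightarrow> ('i \<Rightarrow> 'j \<Rightarrow> 'k) \<Rightarrow> 'i \<Rightarrow> 'j \<Rightarrow> 'j \<Rightarrow> 'k" where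
  "O_defect I C J P M s u v = O_bracket_coeff I C J M s u v - O_action_coeff I J P M s u v"

lemma linmap_apply: "s \<in> I \<Longrightarrow> linmap I J M w s = (\<Sum>c\<in>J. M s c * w c)"
  by (simp add: linmap_def)

lemma brk_linmap_eq_coeffs:
  assumes "s \<in> I"
  shows "brk I C (linmap I J M a) (linmap I J M b) s =
    (\<Sum>u\<in>J. \<Sum>v\<in>J. a u * b v * O_bracket_coeff I C J M s u v)"
proof -
  have "brk I C (linmap I J M a) (linmap I J M b) s =
     (\<Sum>i\<in>I. \<Sum>j\<in>I. \<Sum>v\<in>J. \<Sum>u\<in>J. a u * b v * (M i u * M j v * C i j s))"
    using assms by (simp add: brk_def linmap_def sum_product sum_distrib_left ac_simps)
  also have "\<dots> = (\<Sum>v\<in>J. \<Sum>u\<in>J. \<Sum>i\<in>I. \<Sum>j\<in>I. a u * b v * (M i u * M j v * C i j s))"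
    by (rule sum_swap_pairs)
  also have "\<dots> = (\<Sum>u\<in>J. \<Sum>v\<in>J. \<Sum>i\<in>I. \<Sum>j\<in>I. a u * b v * (M i u * M j v * C i j s))"
    by (rule sum.swap)
  finally show ?thesis
    by (simp add: O_bracket_coeff_def sum_distrib_left)
qed

lemma act_linmap_eq_coeffs:
  assumes "c \<in> J"
  shows "act I J P (linmap I J M a) b c = (\<Sum>u\<in>J. \<Sum>v\<in>J. a u * b v * (\<Sum>i\<in>I. M i u * P i c v))"
proof -
  have "act I J P (linmap I J M a) b c = (\<Sum>i\<in>I. \<Sum>v\<in>J. \<Sum>u\<in>J. a u * b v * (M i u * P i c v))"
    using assms by (simp add: act_def linmap_def sum_distrib_left sum_distrib_right ac_simps)
  also have "\<dots> = (\<Sum>u\<in>J. \<Sum>v\<in>J. \<Sum>i\<in>I. a u * b v * (M i u * P i c v))"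
    by (subst sum.swap, subst (2) sum.swap, subst sum.swap) simp
  finally show ?thesis
    by (simp add: sum_distrib_left)
qed

lemma linmap_act_diff_eq_coeffs:
  assumes "s \<in> I"
  shows "linmap I J M (act I J P (linmap I J M a) b - act I J P (linmap I J M b) a) s =
    (\<Sum>u\<in>J. \<Sum>v\<in>J. a u * b v * O_action_coeff I J P M s u v)"
proof -
  define X where "X c u v = (\<Sum>i\<in>I. M i u * P i c v)" for c u v
  have act_X: "act I J P (linmap I J M x) y c = (\<Sum>u\<in>J. \<Sum>v\<in>J. x u * y v * X c u v)"
    if "c \<in> J" for x y c
    using that by (simp add: act_linmap_eq_coeffs X_def)
  have act_diff: "act I J P (linmap I J M a) b c - act I J P (linmap I J M b) a c =
      (\<Sum>u\<in>J. \<Sum>v\<in>J. a u * b v * (X c u v - X c v u))" if "c \<in> J" for c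
  proof -
    have "act I J P (linmap I J M b) a c = (\<Sum>u\<in>J. \<Sum>v\<in>J. a u * b v * X c v u)"
      by (subst sum.swap) (simp add: act_X[OF that] ac_simps)
    then show ?thesis
      by (simp add: act_X[OF that] right_diff_distrib sum_subtractf)
  qed
  have "linmap I J M (act I J P (linmap I J M a) b - act I J P (linmap I J M b) a) s =
      (\<Sum>c\<in>J. \<Sum>u\<in>J. \<Sum>v\<in>J. a u * b v * (M s c * (X c u v - X c v u)))"
    using assms
    by (simp add: linmap_apply fun_diff_def act_diff sum_distrib_left ac_simps cong: sum.cong)
  also have "\<dots> = (\<Sum>u\<in>J. \<Sum>v\<in>J. \<Sum>c\<in>J. a u * b v * (M s c * (X c u v - X c v u)))"
    by (subst sum.swap, subst (2) sum.swap) simp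
  finally show ?thesis
    by (simp add: O_action_coeff_def X_def sum_distrib_left right_diff_distrib sum_subtractf
        ac_simps)
qed

lemma O_operator_iff_defect_zero:
  fixes M :: "'i \<Rightarrow> 'j \<Rightarrow> 'k::comm_ring_1"
  assumes "finite J"
  shows "O_operator I C J P M \<longleftrightarrow> (\<forall>s\<in>I. \<forall>u\<in>J. \<forall>v\<in>J. O_defect I C J P M s u v = 0)"
proof
  assume O: "O_operator I C J P M"
  show "\<forall>s\<in>I. \<forall>u\<in>J. \<forall>v\<in>J. O_defect I C J P M s u v = 0"
  proof (intro ballI)
    fix s u v assume "s \<in> I" "u \<in> J" "v \<in> J"
    have pick: "(\<Sum>x\<in>J. \<Sum>y\<in>J. bv u x * bv v y * F x y) = (F u v :: 'k)" for F
      using \<open>u \<in> J\<close> \<open>v \<in> J\<close> assms by (simp add: mult.assoc sum_distrib_left[symmetric] sum_bv_times)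
    have "brk I C (linmap I J M (bv u)) (linmap I J M (bv v)) s =
      linmap I J M
        (act I J P (linmap I J M (bv u)) (bv v) - act I J P (linmap I J M (bv v)) (bv u)) s"
      using O \<open>u \<in> J\<close> \<open>v \<in> J\<close> by (simp add: O_operator_def bv_vecs)
    then show "O_defect I C J P M s u v = 0"
      using \<open>s \<in> I\<close> by (simp add: brk_linmap_eq_coeffs linmap_act_diff_eq_coeffs pick O_defect_def)
  qed
next
  assume "\<forall>s\<in>I. \<forall>u\<in>J. \<forall>v\<in>J. O_defect I C J P M s u v = 0"
  then have "brk I C (linmap I J M a) (linmap I J M b) s =
      linmap I J M (act I J P (linmap I J M a) b - act I J P (linmap I J M b) a) s" for a b s
    by (cases "s \<in> I") (simp_all add: brk_linmap_eq_coeffs linmap_act_diff_eq_coeffs O_defect_def,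
        simp_all add: brk_def linmap_def)
  then show "O_operator I C J P M"
    by (simp add: O_operator_def fun_eq_iff)
qed

lemma dual_rep_ad_rep [simp]: "dual_rep (ad_rep D) p c v = - D p c v"
  by (simp add: dual_rep_def ad_rep_def)

definition MYBE_tensor :: "'a set \<Rightarrow> ('a \<Rightarrow> 'a \<Rightarrow> 'a \<Rightarrow> 'k::comm_ring_1) \<Rightarrow> ('a \<Rightarrow> 'a \<Rightarrow> 'k)
    \<Rightarrow> 'a \<times> 'a \<times> 'a \<Rightarrow> 'k" where
  "MYBE_tensor K D r = (\<Sum>p\<in>K. \<Sum>q\<in>K. \<Sum>p'\<in>K. \<Sum>q'\<in>K.
       (\<lambda>w. r p q * r p' q' *
          (tensor3 (brk K D (bv p) (bv p')) (bv q) (bv q') w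
         + tensor3 (bv p) (brk K D (bv q) (bv p')) (bv q') w
         + tensor3 (bv p) (bv p') (brk K D (bv q) (bv q')) w)))"

lemma MYBE_iff_tensor_zero: "MYBE K D r \<longleftrightarrow> MYBE_tensor K D r = 0"
  unfolding MYBE_def MYBE_tensor_def ..

lemma MYBE_tensor_apply:
  fixes D :: "'a \<Rightarrow> 'a \<Rightarrow> 'a \<Rightarrow> 'k::comm_ring_1"
  assumes "finite K"
  shows "MYBE_tensor K D r (s, t, w) =
    (if s \<in> K \<and> t \<in> K \<and> w \<in> K then
       O_bracket_coeff K D K r s t w + (\<Sum>q\<in>K. \<Sum>p\<in>K. r s q * r p w * D q p t)
         + (\<Sum>q\<in>K. \<Sum>p\<in>K. r s q * r t p * D q p w)
     else 0)"
  using assms unfolding MYBE_tensor_def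
  by (simp add: sum_fun_apply tensor3_def brk_bv_bv distrib_left sum.distrib O_bracket_coeff_def
      cong: sum.cong)
    (simp add: bv_def if_distrib[where f="\<lambda>x. x * _"] if_distrib[where f="\<lambda>x. _ * x"]
      sum_if_const_cond mult.assoc cong: if_cong)

lemma MYBE_iff_O_operator_coadjoint:
  fixes D :: "'a \<Rightarrow> 'a \<Rightarrow> 'a \<Rightarrow> 'k::comm_ring_1"
  assumes "finite K"
    and D_antisym: "\<And>p q s. p \<in> K \<Longrightarrow> q \<in> K \<Longrightarrow> s \<in> K \<Longrightarrow> D p q s = - D q p s"
    and r_skew: "skew_tensor K r"
  shows "MYBE K D r \<longleftrightarrow> O_operator K D K (dual_rep (ad_rep D)) r"
proof -
  have component: "MYBE_tensor K D r (s, t, w) = O_defect K D K (dual_rep (ad_rep D)) r s t w"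
    if "s \<in> K" "t \<in> K" "w \<in> K" for s t w
  proof -
    have swap_t: "r s c * r i w * D c i t = - (r s c * r i w * D i c t)"
      and swap_w: "r s c * r t i * D c i w = r s c * r i t * D i c w"
      if "c \<in> K" "i \<in> K" for c i
    proof -
      have "D c i t = - D i c t" "D c i w = - D i c w" "r t i = - r i t"
        using D_antisym r_skew that \<open>t \<in> K\<close> \<open>w \<in> K\<close> unfolding skew_tensor_def by blast+
      then show "r s c * r i w * D c i t = - (r s c * r i w * D i c t)"
        "r s c * r t i * D c i w = r s c * r i t * D i c w"
        by simp_all
    qed
    have "(\<Sum>c\<in>K. \<Sum>i\<in>K. r s c * r i w * D c i t) = - (\<Sum>c\<in>K. \<Sum>i\<in>K. r s c * r i w * D i c t)"
      unfolding sum_negf[symmetric] by (intro sum.cong refl swap_t)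
    moreover have "(\<Sum>c\<in>K. \<Sum>i\<in>K. r s c * r t i * D c i w) = (\<Sum>c\<in>K. \<Sum>i\<in>K. r s c * r i t * D i c w)"
      by (intro sum.cong refl swap_w)
    ultimately show ?thesis
      using that assms(1)
      by (simp add: MYBE_tensor_apply O_defect_def O_action_coeff_def sum_negf)
  qed
  have outside: "MYBE_tensor K D r (s, t, w) = 0" if "\<not> (s \<in> K \<and> t \<in> K \<and> w \<in> K)" for s t w
    using that assms(1) by (subst MYBE_tensor_apply) auto
  have "MYBE K D r \<longleftrightarrow> (\<forall>s t w. MYBE_tensor K D r (s, t, w) = 0)"
    by (simp add: MYBE_iff_tensor_zero fun_eq_iff)
  also have "\<dots> \<longleftrightarrow> (\<forall>s\<in>K. \<forall>t\<in>K. \<forall>w\<in>K. MYBE_tensor K D r (s, t, w) = 0)"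
    using outside by blast
  also have "\<dots> \<longleftrightarrow> (\<forall>s\<in>K. \<forall>t\<in>K. \<forall>w\<in>K. O_defect K D K (dual_rep (ad_rep D)) r s t w = 0)"
    by (simp add: component)
  also have "\<dots> \<longleftrightarrow> O_operator K D K (dual_rep (ad_rep D)) r"
    using assms(1) by (simp add: O_operator_iff_defect_zero)
  finally show ?thesis .
qed

lemma T_minus_sigma_T_simps [simp]:
  "T_minus_sigma_T T (Inl i) (Inr b) = T i b"
  "T_minus_sigma_T T (Inr b) (Inl i) = - T i b"
  "T_minus_sigma_T T (Inl i) (Inl j) = 0"
  "T_minus_sigma_T T (Inr a) (Inr b) = 0"
  by (simp_all add: T_minus_sigma_T_def tensor_of_map_def flip_tensor_def)

lemma semidirect_simps [simp]:
  "semidirect C R (Inl i) (Inl j) (Inl k) = C i j k"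
  "semidirect C R (Inl i) (Inr c) (Inr b) = - R i c b"
  "semidirect C R (Inr c) (Inl i) (Inr b) = R i c b"
  "semidirect C R (Inl i) (Inl j) (Inr b) = 0"
  "semidirect C R (Inl i) (Inr c) (Inl k) = 0"
  "semidirect C R (Inr c) (Inl i) (Inl k) = 0"
  "semidirect C R (Inr c) (Inr b) x = 0"
  by (simp_all add: semidirect_def dual_rep_def split: sum.split)

lemma O_defect_semidirect:
  fixes C :: "'i \<Rightarrow> 'i \<Rightarrow> 'i \<Rightarrow> 'k::comm_ring_1"
    and R :: "'i \<Rightarrow> 'j \<Rightarrow> 'j \<Rightarrow> 'k" and T :: "'i \<Rightarrow> 'j \<Rightarrow> 'k"
  assumes "finite I" "finite J"
  defines "\<delta> \<equiv> O_defect (I <+> J) (semidirect C R) (I <+> J)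
      (dual_rep (ad_rep (semidirect C R))) (T_minus_sigma_T T)"
  shows "\<delta> (Inl k) (Inr a) (Inr b) = O_defect I C J R T k a b"
    and "\<delta> (Inr s) (Inr a) (Inl j) = - O_defect I C J R T j a s"
    and "\<delta> (Inr s) (Inl j) (Inr a) = O_defect I C J R T j a s"
    and "\<delta> (Inr s) (Inr a) (Inr b) = 0"
    and "\<delta> x (Inl i) (Inl j) = 0"
    and "\<delta> (Inl k) (Inl i) (Inr b) = 0"
    and "\<delta> (Inl k) (Inr a) (Inl i) = 0"
  using assms(1,2) unfolding \<delta>_def
  by (simp_all add: O_defect_def O_bracket_coeff_def O_action_coeff_def sum.Plus sum_negf
      sum.swap[where A=I and B=J] sum.swap[where A=I and B=I and g="\<lambda>x y. T x s * T y a * C y x j"])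
    (simp_all add: ac_simps)

lemma O_operator_semidirect_iff:
  fixes C :: "'i \<Rightarrow> 'i \<Rightarrow> 'i \<Rightarrow> 'k::comm_ring_1"
    and R :: "'i \<Rightarrow> 'j \<Rightarrow> 'j \<Rightarrow> 'k" and T :: "'i \<Rightarrow> 'j \<Rightarrow> 'k"
  assumes "finite I" "finite J"
  shows "O_operator (I <+> J) (semidirect C R) (I <+> J) (dual_rep (ad_rep (semidirect C R)))
      (T_minus_sigma_T T) \<longleftrightarrow> O_operator I C J R T"
proof -
  let ?\<delta> = "O_defect (I <+> J) (semidirect C R) (I <+> J) (dual_rep (ad_rep (semidirect C R)))
      (T_minus_sigma_T T)"
  have "(\<forall>s\<in>I <+> J. \<forall>u\<in>I <+> J. \<forall>v\<in>I <+> J. ?\<delta> s u v = 0) \<longleftrightarrow>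
      (\<forall>s\<in>I. \<forall>u\<in>J. \<forall>v\<in>J. O_defect I C J R T s u v = 0)"
  proof (intro iffI ballI)
    fix s u v
    assume "\<forall>s\<in>I <+> J. \<forall>u\<in>I <+> J. \<forall>v\<in>I <+> J. ?\<delta> s u v = 0" "s \<in> I" "u \<in> J" "v \<in> J"
    then have "?\<delta> (Inl s) (Inr u) (Inr v) = 0"
      by blast
    then show "O_defect I C J R T s u v = 0"
      by (simp add: O_defect_semidirect[OF assms])
  next
    fix s u v
    assume "\<forall>s\<in>I. \<forall>u\<in>J. \<forall>v\<in>J. O_defect I C J R T s u v = 0"
      and "s \<in> I <+> J" "u \<in> I <+> J" "v \<in> I <+> J"
    then show "?\<delta> s u v = 0"
      by (cases s; cases u; cases v) (auto simp: O_defect_semidirect[OF assms])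
  qed
  then show ?thesis
    using assms by (simp add: O_operator_iff_defect_zero)
qed

lemma malcev_alg_antisym:
  assumes "finite I" "malcev_alg I C" "i \<in> I" "j \<in> I" "k \<in> I"
  shows "C i j k = - C j i k"
proof -
  have "\<forall>x\<in>vecs I. \<forall>y\<in>vecs I. brk I C x y = - brk I C y x"
    using assms(2) unfolding malcev_alg_def by (rule conjunct1)
  then have "brk I C (bv i) (bv j) = - brk I C (bv j) (bv i)"
    using bv_vecs[OF assms(3)] bv_vecs[OF assms(4)] by blast
  then have "brk I C (bv i) (bv j) k = - brk I C (bv j) (bv i) k"
    by simp
  then show ?thesis
    using assms by (simp add: brk_bv_bv)
qed

lemma semidirect_antisym:
  assumes C_antisym: "\<And>i j k. i \<in> I \<Longrightarrow> j \<in> I \<Longrightarrow> k \<in> I \<Longrightarrow> C i j k = - C j i k"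
    and "p \<in> I <+> J" "q \<in> I <+> J" "s \<in> I <+> J"
  shows "semidirect C R p q s = - semidirect C R q p s"
  using assms(2-4) by (cases p; cases q; cases s) (auto intro: C_antisym)

lemma skew_tensor_T_minus_sigma_T: "skew_tensor K (T_minus_sigma_T T)"
  by (simp add: skew_tensor_def T_minus_sigma_T_def flip_tensor_def)

theorem corollary2p11:
  fixes I :: "'i set" and J :: "'j set"
    and C :: "'i \<Rightarrow> 'i \<Rightarrow> 'i \<Rightarrow> 'k::field_char_0"
    and R :: "'i \<Rightarrow> 'j \<Rightarrow> 'j \<Rightarrow> 'k"
    and T :: "'i \<Rightarrow> 'j \<Rightarrow> 'k"
  assumes "finite I" and "finite J"
    and "malcev_alg I C"
    and "is_rep I C J R"
  shows "(O_operator I C J R T \<longleftrightarrow>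
            skew_tensor (I <+> J) (T_minus_sigma_T T) \<and>
            MYBE (I <+> J) (semidirect C R) (T_minus_sigma_T T))
       \<and> (O_operator I C J R T \<longleftrightarrow>
            O_operator (I <+> J) (semidirect C R) (I <+> J)
              (dual_rep (ad_rep (semidirect C R))) (T_minus_sigma_T T))"
proof -
  have "finite (I <+> J)"
    using assms(1,2) by simp
  then have "MYBE (I <+> J) (semidirect C R) (T_minus_sigma_T T) \<longleftrightarrow>
      O_operator (I <+> J) (semidirect C R) (I <+> J) (dual_rep (ad_rep (semidirect C R)))
        (T_minus_sigma_T T)"
    using semidirect_antisym[OF malcev_alg_antisym[OF assms(1,3)]] skew_tensor_T_minus_sigma_T
    by (rule MYBE_iff_O_operator_coadjoint)
  then show ?thesis
    using O_operator_semidirect_iff[OF assms(1,2)] skew_tensor_T_minus_sigma_T by blast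
qed

end
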